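(* For every $p\in[1,\infty)$, the $\ell^p$ compression rate of $\mathbb Z\wr\mathbb Z$ is at least $1/3$: for every $\alpha<1/3$ there exist a measure space $(\Omega,\nu)$, a Lipschitz map $\theta\colon\mathbb Z\wr\mathbb Z\to L^p(\Omega,\nu)$ and constants $c>0$, $t_0$ such that $\|\theta(x)-\theta(y)\|_p\ge c\,d(x,y)^\alpha$ whenever $d(x,y)\ge t_0$.
   Context: The lamplighter group $\mathbb Z\wr\mathbb Z$ consists of pairs $(f,n)$ with $f\colon\mathbb Z\to\mathbb Z$ finitely supported and $n\in\mathbb Z$, with product $(f,n)(g,n')=(f+g(\cdot-n),n+n')$, equipped with the word metric $d$ for generators $(\delta_0,0)$ and $(0,1)$. The $\ell^p$ compression rate of a metric space is the supremum of $\alpha$ such that it admits a Lipschitz map into an $L^p$-space with $\|\theta(x)-\theta(y)\|_p\ge\rho_-(d(x,y))$ for some $\rho_-$ with $\rho_-(t)\ge c\,t^\alpha$ for large $t$. *)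

theory Defs
  imports "HOL-Analysis.Analysis"
begin

type_synonym lamp = "(int \<Rightarrow> int) \<times> int"

definition lamp_carrier :: "lamp set" where
  "lamp_carrier = {(f, n). finite {k. f k \<noteq> 0}}"

definition lamp_mult :: "lamp \<Rightarrow> lamp \<Rightarrow> lamp" where
  "lamp_mult x y = (\<lambda>k. fst x k + fst y (k - snd x), snd x + snd y)"

definition delta0 :: "int \<Rightarrow> int" where
  "delta0 k = (if k = 0 then 1 else 0)"

definition lamp_gens :: "lamp set" where
  "lamp_gens = {(delta0, 0), (\<lambda>k. - delta0 k, 0), (\<lambda>_. 0, 1), (\<lambda>_. 0, -1)}"

inductive lamp_path :: "lamp \<Rightarrow> nat \<Rightarrow> lamp \<Rightarrow> bool" where
  refl: "lamp_path x 0 x"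
| step: "lamp_path x k y \<Longrightarrow> s \<in> lamp_gens \<Longrightarrow> lamp_path x (Suc k) (lamp_mult y s)"

definition lamp_dist :: "lamp \<Rightarrow> lamp \<Rightarrow> nat" where
  "lamp_dist x y = (LEAST k. lamp_path x k y)"

definition in_Lp :: "'a measure \<Rightarrow> real \<Rightarrow> ('a \<Rightarrow> real) \<Rightarrow> bool" where
  "in_Lp M p f \<longleftrightarrow> f \<in> borel_measurable M \<and> integrable M (\<lambda>\<omega>. \<bar>f \<omega>\<bar> powr p)"

definition Lp_norm :: "'a measure \<Rightarrow> real \<Rightarrow> ('a \<Rightarrow> real) \<Rightarrow> real" where
  "Lp_norm M p f = (\<integral>\<omega>. \<bar>f \<omega>\<bar> powr p \<partial>M) powr (1 / p)"

end

theory Submission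
  imports Defs
begin

text \<open>The lamplighter element (f, n) is sent to a finitely supported function on
  countably many coordinates: the cursor n, the lamp values f j, and, for each position k \<le> n
  such that the lamps strictly left of k are not all off, the weight (n - k + 1) powr (2/3 - 1/p)
  on a coordinate labelled by k together with that left configuration; the right-hand side is
  treated symmetrically by reflection. A generator either changes one lamp or moves every weight
  by one step, and the p-th powers of the weight increments are bounded by the summable
  sequence (j + 1) powr (-4/3), so the map is Lipschitz. Conversely, if f and g differ at some
  s < n, then for s < k \<le> n the left configurations of f and g at k differ, so the weights of
  (f, n) sit on coordinates where the image of (g, m) vanishes, and the distance of the images is
  at least a constant times (n - s) powr (2/3). Together with the cursor and lamp coordinates
  this bounds the length of a path sweeping from (f, n) to (g, m) by a constant times
  N powr (5/2), where N is the distance of the images; hence the compression exponent is at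
  least 2/5 > 1/3.\<close>

section \<open>Finitely supported functions and their \<open>\<ell>\<^sup>p\<close> norms\<close>

definition supp :: "('a \<Rightarrow> 'b::zero) \<Rightarrow> 'a set" where
  "supp u = {w. u w \<noteq> 0}"

text \<open>Only meaningful for finite support: over an infinite support the sum is 0.\<close>

definition lp_norm :: "real \<Rightarrow> ('a \<Rightarrow> real) \<Rightarrow> real" where
  "lp_norm p u = (\<Sum>w\<in>supp u. \<bar>u w\<bar> powr p) powr (1 / p)"

lemma finite_supp_add:
  fixes u v :: "'a \<Rightarrow> real"
  shows "finite (supp u) \<Longrightarrow> finite (supp v) \<Longrightarrow> finite (supp (\<lambda>w. u w + v w))"
  by (rule finite_subset[of _ "supp u \<union> supp v"]) (auto simp: supp_def)

lemma finite_supp_diff: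
  fixes u v :: "'a \<Rightarrow> real"
  shows "finite (supp u) \<Longrightarrow> finite (supp v) \<Longrightarrow> finite (supp (\<lambda>w. u w - v w))"
  by (rule finite_subset[of _ "supp u \<union> supp v"]) (auto simp: supp_def)

lemma finite_supp_comp:
  assumes "inj e" "finite (supp u)"
  shows "finite (supp (\<lambda>a. u (e a)))"
proof -
  have "supp (\<lambda>a. u (e a)) = e -` supp u"
    by (auto simp: supp_def)
  then show ?thesis
    using assms by (simp add: finite_vimageI)
qed

lemma lp_norm_eq_sum:
  assumes "finite A" "supp u \<subseteq> A"
  shows "lp_norm p u = (\<Sum>w\<in>A. \<bar>u w\<bar> powr p) powr (1 / p)"
  unfolding lp_norm_def
  by (rule arg_cong[where f = "\<lambda>s. s powr (1 / p)"], rule sum.mono_neutral_left)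
     (use assms in \<open>auto simp: supp_def\<close>)

lemma lp_norm_nonneg: "0 \<le> lp_norm p u"
  by (simp add: lp_norm_def)

lemma lp_norm_zero [simp]: "lp_norm p (\<lambda>_. 0) = 0"
  by (simp add: lp_norm_def supp_def)

lemma lp_norm_minus_commute: "lp_norm p (\<lambda>w. u w - v w) = lp_norm p (\<lambda>w. v w - u w)"
proof -
  have "supp (\<lambda>w. u w - v w) = supp (\<lambda>w. v w - u w)"
    by (auto simp: supp_def)
  then show ?thesis
    unfolding lp_norm_def by (metis (no_types, lifting) abs_minus_commute sum.cong)
qed

lemma lp_norm_le_of_sum_le:
  assumes "finite A" "supp u \<subseteq> A" "(\<Sum>w\<in>A. \<bar>u w\<bar> powr p) \<le> B" "0 < p"
  shows "lp_norm p u \<le> B powr (1 / p)"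
  unfolding lp_norm_eq_sum[OF assms(1,2)]
  by (rule powr_mono2) (use assms in \<open>auto intro: sum_nonneg\<close>)

lemma sum_le_lp_norm:
  assumes "finite (supp u)" "finite A" "0 < p"
  shows "(\<Sum>w\<in>A. \<bar>u w\<bar> powr p) powr (1 / p) \<le> lp_norm p u"
proof -
  have "(\<Sum>w\<in>A. \<bar>u w\<bar> powr p) \<le> (\<Sum>w\<in>A \<union> supp u. \<bar>u w\<bar> powr p)"
    by (rule sum_mono2) (use assms in auto)
  then show ?thesis
    using assms by (subst lp_norm_eq_sum[of "A \<union> supp u"]) (auto intro!: powr_mono2 sum_nonneg)
qed

lemma abs_le_lp_norm:
  assumes "finite (supp u)" "0 < p"
  shows "\<bar>u w\<bar> \<le> lp_norm p u"
  using sum_le_lp_norm[OF assms(1) _ assms(2), of "{w}"] assms(2) by (simp add: powr_powr)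

lemma lp_norm_singleton:
  assumes "supp u \<subseteq> {w}" "0 < p"
  shows "lp_norm p u = \<bar>u w\<bar>"
  using lp_norm_eq_sum[of "{w}" u p] assms by (simp add: powr_powr)

lemma convex_on_powr_nonneg:
  assumes "1 \<le> p"
  shows "convex_on {0..} (\<lambda>x::real. x powr p)"
proof (rule convex_on_linorderI)
  fix t x y :: real
  assume t: "0 < t" "t < 1" and xy: "x \<in> {0..}" "y \<in> {0..}" "x < y"
  show "((1 - t) *\<^sub>R x + t *\<^sub>R y) powr p \<le> (1 - t) * x powr p + t * y powr p"
  proof (cases "x = 0")
    case True
    have "(t * y) powr p = t powr p * y powr p"
      using t xy by (simp add: powr_mult)
    also have "\<dots> \<le> t * y powr p"
      using powr_le_one_le[of t p] t assms by (intro mult_right_mono) auto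
    finally show ?thesis using True by simp
  next
    case False
    then show ?thesis
      using convex_onD[OF powr_convex[OF assms], of t x y] t xy by simp
  qed
qed simp

lemma abs_add_powr_le:
  fixes a b A B p :: real
  assumes "1 \<le> p" "0 < A" "0 < B"
  shows "\<bar>a + b\<bar> powr p
    \<le> (A + B) powr p * (A / (A + B) * (\<bar>a\<bar> / A) powr p + B / (A + B) * (\<bar>b\<bar> / B) powr p)"
proof -
  let ?t = "A / (A + B)"
  have t: "0 \<le> ?t" "?t \<le> 1" "1 - ?t = B / (A + B)"
    using assms by (auto simp: field_simps)
  have "\<bar>a + b\<bar> powr p \<le> (\<bar>a\<bar> + \<bar>b\<bar>) powr p"
    using assms by (intro powr_mono2) auto
  also have "\<bar>a\<bar> + \<bar>b\<bar> = (A + B) * ((1 - ?t) * (\<bar>b\<bar> / B) + ?t * (\<bar>a\<bar> / A))"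
    using assms unfolding t(3) by (simp add: add_divide_distrib[symmetric])
  also have "\<dots> powr p = (A + B) powr p * ((1 - ?t) * (\<bar>b\<bar> / B) + ?t * (\<bar>a\<bar> / A)) powr p"
    using assms t by (auto intro!: powr_mult)
  also have "\<dots> \<le> (A + B) powr p * ((1 - ?t) * (\<bar>b\<bar> / B) powr p + ?t * (\<bar>a\<bar> / A) powr p)"
    using convex_onD[OF convex_on_powr_nonneg[OF assms(1)], of ?t "\<bar>b\<bar> / B" "\<bar>a\<bar> / A"] t assms
    by (intro mult_left_mono) auto
  finally show ?thesis
    unfolding t(3) by (simp add: add.commute)
qed

lemma minkowski_sum:
  fixes a b :: "'a \<Rightarrow> real"
  assumes "finite A" "1 \<le> p"
  shows "(\<Sum>i\<in>A. \<bar>a i + b i\<bar> powr p) powr (1 / p)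
     \<le> (\<Sum>i\<in>A. \<bar>a i\<bar> powr p) powr (1 / p) + (\<Sum>i\<in>A. \<bar>b i\<bar> powr p) powr (1 / p)"
proof -
  define na where "na c = (\<Sum>i\<in>A. \<bar>c i\<bar> powr p) powr (1 / p)" for c :: "'a \<Rightarrow> real"
  have p: "0 < p" using assms by simp
  have na_zero: "na c = 0 \<longleftrightarrow> (\<forall>i\<in>A. c i = 0)" for c
    using assms by (simp add: na_def sum_nonneg_eq_0_iff)
  have na_pow: "na c powr p = (\<Sum>i\<in>A. \<bar>c i\<bar> powr p)" for c
    using p by (simp add: na_def powr_powr sum_nonneg)
  have "na (\<lambda>i. a i + b i) \<le> na a + na b"
  proof (cases "na a = 0 \<or> na b = 0")
    case True
    then show ?thesis
      by (elim disjE) (simp_all add: na_zero, simp_all add: na_def cong: sum.cong)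
  next
    case False
    then have Na: "0 < na a" and Nb: "0 < na b"
      by (auto simp: na_def less_le)
    have normalised: "(\<Sum>i\<in>A. (\<bar>c i\<bar> / na c) powr p) = 1" if "0 < na c" for c
      using that by (simp add: powr_divide sum_divide_distrib[symmetric] na_pow[symmetric])
    have "na (\<lambda>i. a i + b i) powr p \<le> (\<Sum>i\<in>A. (na a + na b) powr p
        * (na a / (na a + na b) * (\<bar>a i\<bar> / na a) powr p + na b / (na a + na b) * (\<bar>b i\<bar> / na b) powr p))"
      unfolding na_pow using assms(2) Na Nb by (intro sum_mono abs_add_powr_le)
    also have "\<dots> = (na a + na b) powr p * (na a / (na a + na b) * (\<Sum>i\<in>A. (\<bar>a i\<bar> / na a) powr p)
        + na b / (na a + na b) * (\<Sum>i\<in>A. (\<bar>b i\<bar> / na b) powr p))"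
      by (simp add: sum_distrib_left sum.distrib distrib_left mult.assoc)
    also have "\<dots> = (na a + na b) powr p"
      using Na Nb by (simp add: normalised add_divide_distrib[symmetric])
    finally show ?thesis
      using powr_less_mono2[OF p, of "na a + na b" "na (\<lambda>i. a i + b i)"] Na Nb by force
  qed
  then show ?thesis
    unfolding na_def .
qed

lemma lp_norm_triangle:
  assumes "finite (supp u)" "finite (supp v)" "1 \<le> p"
  shows "lp_norm p (\<lambda>w. u w + v w) \<le> lp_norm p u + lp_norm p v"
proof -
  let ?A = "supp u \<union> supp v"
  have "finite ?A"
    using assms by simp
  then have "lp_norm p (\<lambda>w. u w + v w) = (\<Sum>w\<in>?A. \<bar>u w + v w\<bar> powr p) powr (1 / p)"
    "lp_norm p u = (\<Sum>w\<in>?A. \<bar>u w\<bar> powr p) powr (1 / p)"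
    "lp_norm p v = (\<Sum>w\<in>?A. \<bar>v w\<bar> powr p) powr (1 / p)"
    by (auto intro!: lp_norm_eq_sum simp: supp_def)
  then show ?thesis
    using minkowski_sum[OF \<open>finite ?A\<close> assms(3)] by simp
qed

lemma lp_norm_triangle_diff:
  assumes "finite (supp u)" "finite (supp v)" "finite (supp z)" "1 \<le> p"
  shows "lp_norm p (\<lambda>w. u w - z w) \<le> lp_norm p (\<lambda>w. u w - v w) + lp_norm p (\<lambda>w. v w - z w)"
proof -
  have "lp_norm p (\<lambda>w. (u w - v w) + (v w - z w)) \<le> lp_norm p (\<lambda>w. u w - v w) + lp_norm p (\<lambda>w. v w - z w)"
    using assms finite_supp_diff by (intro lp_norm_triangle) blast+
  then show ?thesis
    by simp
qed

lemma Lp_norm_count_space: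
  assumes "finite (supp u)"
  shows "Lp_norm (count_space UNIV) p u = lp_norm p u"
proof -
  have "{w \<in> UNIV. \<bar>u w\<bar> powr p \<noteq> 0} = supp u"
    by (auto simp: supp_def)
  then show ?thesis
    using assms unfolding Lp_norm_def lp_norm_def
    by (subst lebesgue_integral_count_space_finite_support) auto
qed

lemma in_Lp_count_space:
  assumes "finite (supp u)"
  shows "in_Lp (count_space UNIV) p u"
proof -
  have int: "integrable (count_space UNIV) (\<lambda>w. \<Sum>v\<in>supp u. indicator {v} w *\<^sub>R \<bar>u v\<bar> powr p)"
    by (intro Bochner_Integration.integrable_sum integrable_scaleR_left integrable_real_indicator) auto
  have eq: "(\<lambda>w. \<Sum>v\<in>supp u. indicator {v} w *\<^sub>R \<bar>u v\<bar> powr p) = (\<lambda>w. \<bar>u w\<bar> powr p)"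
  proof
    fix w
    have "(\<Sum>v\<in>supp u. indicator {v} w *\<^sub>R \<bar>u v\<bar> powr p) = (\<Sum>v\<in>supp u. if v = w then \<bar>u v\<bar> powr p else 0)"
      by (rule sum.cong) (auto simp: indicator_def)
    also have "\<dots> = \<bar>u w\<bar> powr p"
      using assms by (simp add: sum.delta supp_def)
    finally show "(\<Sum>v\<in>supp u. indicator {v} w *\<^sub>R \<bar>u v\<bar> powr p) = \<bar>u w\<bar> powr p" .
  qed
  show ?thesis
    using int unfolding eq in_Lp_def by simp
qed

definition zero_extend :: "('a \<Rightarrow> 'b) \<Rightarrow> ('a \<Rightarrow> real) \<Rightarrow> 'b \<Rightarrow> real" where
  "zero_extend e u w = (if w \<in> range e then u (inv e w) else 0)"

lemma zero_extend_apply [simp]: "inj e \<Longrightarrow> zero_extend e u (e a) = u a"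
  by (simp add: zero_extend_def)

lemma zero_extend_diff:
  "zero_extend e (\<lambda>a. u a - v a) w = zero_extend e u w - zero_extend e v w"
  by (simp add: zero_extend_def)

lemma supp_zero_extend: "inj e \<Longrightarrow> supp (zero_extend e u) = e ` supp u"
  by (auto simp: supp_def zero_extend_def dest: injD)

lemma lp_norm_zero_extend:
  assumes "inj e" "finite (supp u)"
  shows "lp_norm p (zero_extend e u) = lp_norm p u"
  unfolding lp_norm_def supp_zero_extend[OF assms(1)]
  using assms by (simp add: sum.reindex inj_on_subset[OF assms(1)])

lemma lp_norm_comp_le:
  assumes "inj e" "finite (supp u)" "0 < p"
  shows "lp_norm p (\<lambda>a. u (e a)) \<le> lp_norm p u"
proof -
  have fin: "finite (supp (\<lambda>a. u (e a)))"
    using finite_supp_comp[OF assms(1,2)] .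
  have "lp_norm p (\<lambda>a. u (e a)) = (\<Sum>w\<in>e ` supp (\<lambda>a. u (e a)). \<bar>u w\<bar> powr p) powr (1 / p)"
    unfolding lp_norm_def using assms by (simp add: sum.reindex inj_on_subset[OF assms(1)])
  also have "\<dots> \<le> lp_norm p u"
    using fin assms by (intro sum_le_lp_norm) auto
  finally show ?thesis .
qed

section \<open>The word metric of the lamplighter group\<close>

lemma lamp_mult_gens [simp]:
  "lamp_mult (f, n) (delta0, 0) = (f(n := f n + 1), n)"
  "lamp_mult (f, n) (\<lambda>k. - delta0 k, 0) = (f(n := f n - 1), n)"
  "lamp_mult (f, n) (\<lambda>_. 0, 1) = (f, n + 1)"
  "lamp_mult (f, n) (\<lambda>_. 0, - 1) = (f, n - 1)"
  by (auto simp: lamp_mult_def delta0_def)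

lemma lamp_gens_cases [consumes 1, case_names up down right left]:
  assumes "s \<in> lamp_gens"
  obtains "s = (delta0, 0)" | "s = (\<lambda>k. - delta0 k, 0)" | "s = (\<lambda>_. 0, 1)" | "s = (\<lambda>_. 0, - 1)"
  using assms unfolding lamp_gens_def by auto

lemma lamp_carrier_iff [simp]: "(f, n) \<in> lamp_carrier \<longleftrightarrow> finite (supp f)"
  by (simp add: lamp_carrier_def supp_def)

lemma lamp_mult_gen_in_carrier:
  assumes "x \<in> lamp_carrier" "s \<in> lamp_gens"
  shows "lamp_mult x s \<in> lamp_carrier"
proof -
  obtain f n where x: "x = (f, n)" by fastforce
  have upd: "finite (supp (f(n := v)))" for v
    using assms(1) x by (auto intro: finite_subset[of _ "insert n (supp f)"] simp: supp_def)
  from assms(2) show ?thesis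
    by (cases rule: lamp_gens_cases) (use assms(1) upd in \<open>simp_all add: x\<close>)
qed

lemma lamp_path_in_carrier: "lamp_path x k y \<Longrightarrow> x \<in> lamp_carrier \<Longrightarrow> y \<in> lamp_carrier"
  by (induction rule: lamp_path.induct) (auto intro: lamp_mult_gen_in_carrier)

lemma lamp_path_trans:
  assumes "lamp_path x a y" "lamp_path y b z"
  shows "lamp_path x (a + b) z"
  using assms(2,1) by (induction rule: lamp_path.induct) (auto intro: lamp_path.step)

lemma lamp_path_iterate:
  assumes "s \<in> lamp_gens"
  shows "lamp_path x k (((\<lambda>y. lamp_mult y s) ^^ k) x)"
  by (induction k) (auto intro: lamp_path.intros assms)

lemma lamp_path_move: "lamp_path (f, n) (nat \<bar>m - n\<bar>) (f, m)"
proof -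
  have right: "((\<lambda>y. lamp_mult y (\<lambda>_. 0, 1)) ^^ k) (f, n) = (f, n + int k)" for k
    by (induction k) auto
  have left: "((\<lambda>y. lamp_mult y (\<lambda>_. 0, - 1)) ^^ k) (f, n) = (f, n - int k)" for k
    by (induction k) auto
  show ?thesis
  proof (cases "n \<le> m")
    case True
    then show ?thesis
      using lamp_path_iterate[of "(\<lambda>_. 0, 1)" "(f, n)" "nat (m - n)"] by (simp add: lamp_gens_def right)
  next
    case False
    then show ?thesis
      using lamp_path_iterate[of "(\<lambda>_. 0, - 1)" "(f, n)" "nat (n - m)"] by (simp add: lamp_gens_def left)
  qed
qed

lemma lamp_path_set_lamp: "lamp_path (f, n) (nat \<bar>v - f n\<bar>) (f(n := v), n)"
proof -
  have up: "((\<lambda>y. lamp_mult y (delta0, 0)) ^^ k) (f, n) = (f(n := f n + int k), n)" for k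
    by (induction k) auto
  have down: "((\<lambda>y. lamp_mult y (\<lambda>k. - delta0 k, 0)) ^^ k) (f, n) = (f(n := f n - int k), n)" for k
    by (induction k) auto
  show ?thesis
  proof (cases "f n \<le> v")
    case True
    then show ?thesis
      using lamp_path_iterate[of "(delta0, 0)" "(f, n)" "nat (v - f n)"] by (simp add: lamp_gens_def up)
  next
    case False
    then show ?thesis
      using lamp_path_iterate[of "(\<lambda>k. - delta0 k, 0)" "(f, n)" "nat (f n - v)"]
      by (simp add: lamp_gens_def down)
  qed
qed

lemma lamp_path_sweep:
  assumes "lo \<le> hi" "\<forall>j. j < lo \<or> hi < j \<longrightarrow> f j = g j"
  shows "lamp_path (f, lo) (nat (hi - lo) + (\<Sum>j=lo..hi. nat \<bar>g j - f j\<bar>)) (g, hi)"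
  using assms
proof (induction "nat (hi - lo)" arbitrary: f lo)
  case 0
  then have "lo = hi"
    by simp
  have "g = f(lo := g lo)"
  proof
    fix j
    show "g j = (f(lo := g lo)) j"
      using 0(3) \<open>lo = hi\<close> by (cases j lo rule: linorder_cases) auto
  qed
  then show ?case
    using lamp_path_set_lamp[of f lo "g lo"] \<open>lo = hi\<close> by simp
next
  case (Suc k)
  let ?f' = "f(lo := g lo)"
  have sum_eq: "(\<Sum>j=lo+1..hi. nat \<bar>g j - ?f' j\<bar>) = (\<Sum>j=lo+1..hi. nat \<bar>g j - f j\<bar>)"
    by (rule sum.cong) auto
  have "lamp_path (?f', lo + 1) (nat (hi - (lo + 1)) + (\<Sum>j=lo+1..hi. nat \<bar>g j - ?f' j\<bar>)) (g, hi)"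
    using Suc.hyps(2) Suc.prems(2) by (intro Suc.hyps(1)) auto
  then have tail: "lamp_path (?f', lo + 1) (nat (hi - (lo + 1)) + (\<Sum>j=lo+1..hi. nat \<bar>g j - f j\<bar>)) (g, hi)"
    unfolding sum_eq .
  have head: "lamp_path (f, lo) (nat \<bar>g lo - f lo\<bar> + nat \<bar>(lo + 1) - lo\<bar>) (?f', lo + 1)"
    by (rule lamp_path_trans[OF lamp_path_set_lamp lamp_path_move])
  have "{lo..hi} = insert lo {lo+1..hi}"
    using Suc.hyps(2) by auto
  then have "nat (hi - lo) + (\<Sum>j=lo..hi. nat \<bar>g j - f j\<bar>)
      = nat \<bar>g lo - f lo\<bar> + nat \<bar>(lo + 1) - lo\<bar> + (nat (hi - (lo + 1)) + (\<Sum>j=lo+1..hi. nat \<bar>g j - f j\<bar>))"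
    using Suc.hyps(2) by simp
  then show ?case
    using lamp_path_trans[OF head tail] by simp
qed

lemma lamp_dist_le: "lamp_path x k y \<Longrightarrow> lamp_dist x y \<le> k"
  unfolding lamp_dist_def by (rule Least_le)

lemma lamp_path_via_sweep:
  assumes "lo \<le> n" "lo \<le> m" "n \<le> hi" "m \<le> hi" "\<forall>j. j < lo \<or> hi < j \<longrightarrow> f j = g j"
  shows "lamp_path (f, n)
    (nat \<bar>lo - n\<bar> + (nat (hi - lo) + (\<Sum>j=lo..hi. nat \<bar>g j - f j\<bar>)) + nat \<bar>m - hi\<bar>) (g, m)"
  using assms by (intro lamp_path_trans[OF lamp_path_trans, of _ _ "(f, lo)" _ "(g, hi)"]
      lamp_path_move lamp_path_sweep) auto

lemma lamp_dist_le_sweep: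
  assumes "lo \<le> n" "lo \<le> m" "n \<le> hi" "m \<le> hi" "\<forall>j. j < lo \<or> hi < j \<longrightarrow> f j = g j"
  shows "lamp_dist (f, n) (g, m) \<le> 3 * nat (hi - lo) + (\<Sum>j=lo..hi. nat \<bar>g j - f j\<bar>)"
  using lamp_dist_le[OF lamp_path_via_sweep[OF assms]] assms by auto

lemma lamp_path_lamp_dist:
  assumes "x \<in> lamp_carrier" "y \<in> lamp_carrier"
  shows "lamp_path x (lamp_dist x y) y"
proof -
  obtain f n g m where xy: "x = (f, n)" "y = (g, m)" by fastforce
  have "finite (supp f \<union> supp g)"
    using assms xy by simp
  then obtain B where B: "\<And>j. j \<in> supp f \<union> supp g \<Longrightarrow> \<bar>j\<bar> \<le> B"
    unfolding finite_int_iff_bounded_le by (auto simp: subset_iff)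
  define lo where "lo = min (min n m) (- B)"
  define hi where "hi = max (max n m) B"
  have bounds: "lo \<le> n" "lo \<le> m" "n \<le> hi" "m \<le> hi"
    unfolding lo_def hi_def by auto
  have agree: "\<forall>j. j < lo \<or> hi < j \<longrightarrow> f j = g j"
  proof (intro allI impI)
    fix j
    assume "j < lo \<or> hi < j"
    then have "j \<notin> supp f \<union> supp g"
      using B unfolding lo_def hi_def by force
    then show "f j = g j"
      by (simp add: supp_def)
  qed
  have "\<exists>k. lamp_path x k y"
    using lamp_path_via_sweep[OF bounds agree] unfolding xy by blast
  then show ?thesis
    unfolding lamp_dist_def by (rule LeastI_ex)
qed

lemma disagreement_window:
  fixes f g :: "int \<Rightarrow> int"
  assumes "finite (supp f)" "finite (supp g)"
  obtains lo hi where "lo \<le> min n m" "max n m \<le> hi" "\<forall>j. j < lo \<or> hi < j \<longrightarrow> f j = g j"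
    "lo < min n m \<Longrightarrow> f lo \<noteq> g lo" "max n m < hi \<Longrightarrow> f hi \<noteq> g hi"
proof -
  let ?S = "{j. f j \<noteq> g j}"
  have fin: "finite ?S"
    using assms by (auto intro: finite_subset[of _ "supp f \<union> supp g"] simp: supp_def)
  define lo where "lo = Min (insert (min n m) ?S)"
  define hi where "hi = Max (insert (max n m) ?S)"
  show ?thesis
  proof (rule that)
    show "lo \<le> min n m" "max n m \<le> hi"
      unfolding lo_def hi_def using fin by (intro Min_le Max_ge; simp)+
    show "\<forall>j. j < lo \<or> hi < j \<longrightarrow> f j = g j"
      unfolding lo_def hi_def using fin Min_le[of "insert (min n m) ?S"] Max_ge[of "insert (max n m) ?S"]
      by (metis (mono_tags) finite_insert insertCI leD mem_Collect_eq)
    show "f lo \<noteq> g lo" if "lo < min n m"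
      using Min_in[of "insert (min n m) ?S"] fin that unfolding lo_def by auto
    show "f hi \<noteq> g hi" if "max n m < hi"
      using Max_in[of "insert (max n m) ?S"] fin that unfolding hi_def by auto
  qed
qed

lemma lamp_dist_le_window:
  assumes "lo \<le> n" "lo \<le> m" "n \<le> hi" "m \<le> hi" "\<forall>j. j < lo \<or> hi < j \<longrightarrow> f j = g j"
    and "\<And>j. \<bar>real_of_int (f j - g j)\<bar> \<le> B"
  shows "real (lamp_dist (f, n) (g, m)) \<le> 3 * real_of_int (hi - lo) + real_of_int (hi - lo + 1) * B"
proof -
  have "real (lamp_dist (f, n) (g, m)) \<le> real (3 * nat (hi - lo) + (\<Sum>j=lo..hi. nat \<bar>g j - f j\<bar>))"
    using lamp_dist_le_sweep[OF assms(1-5)] by (simp only: of_nat_le_iff)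
  also have "\<dots> = 3 * real_of_int (hi - lo) + (\<Sum>j=lo..hi. \<bar>real_of_int (g j - f j)\<bar>)"
    using assms(1,3) by (simp add: of_nat_sum)
  also have "(\<Sum>j=lo..hi. \<bar>real_of_int (g j - f j)\<bar>) \<le> (\<Sum>j=lo..hi. B)"
    using assms(6) by (intro sum_mono) (metis abs_minus_commute of_int_diff)
  finally show ?thesis
    using assms(1,3) by simp
qed

section \<open>The embedding\<close>

text \<open>A coordinate \<open>Left_tree (k, a)\<close> belongs to position k and to the configuration of lamps
  strictly left of k whose code is a; \<open>Right_tree\<close> is the same for the reflected lamp group.\<close>

datatype coord = Cursor | Lamp int | Left_tree "int \<times> nat" | Right_tree "int \<times> nat"

instance coord :: countable
  by countable_datatype

definition left_config :: "(int \<Rightarrow> int) \<Rightarrow> int \<Rightarrow> (int \<times> int) set" where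
  "left_config f k = {(j, f j) | j. j < k \<and> f j \<noteq> 0}"

definition config_code :: "(int \<times> int) set \<Rightarrow> nat" where
  "config_code = to_nat_on {A. finite A}"

definition reflect :: "(int \<Rightarrow> int) \<Rightarrow> int \<Rightarrow> int" where
  "reflect f j = f (- j)"

text \<open>The exponent makes the p-th powers of the increments of \<open>weight p\<close> summable
  (they decay like j powr (-4/3)), while their sum over j < a still grows like a powr (2p/3).\<close>

definition weight :: "real \<Rightarrow> int \<Rightarrow> real" where
  "weight p j = (if 0 \<le> j then (real_of_int j + 1) powr (2 / 3 - 1 / p) else 0)"

text \<open>Requiring a nonempty left configuration keeps the support finite: the admissible k lie
  between the leftmost lit lamp and the cursor.\<close>

definition tree :: "real \<Rightarrow> (int \<Rightarrow> int) \<Rightarrow> int \<Rightarrow> int \<times> nat \<Rightarrow> real" where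
  "tree p f n = (\<lambda>(k, a). if left_config f k \<noteq> {} \<and> a = config_code (left_config f k)
                          then weight p (n - k) else 0)"

fun lamp_embed :: "real \<Rightarrow> lamp \<Rightarrow> coord \<Rightarrow> real" where
  "lamp_embed p (f, n) Cursor = n"
| "lamp_embed p (f, n) (Lamp j) = f j"
| "lamp_embed p (f, n) (Left_tree z) = tree p f n z"
| "lamp_embed p (f, n) (Right_tree z) = tree p (reflect f) (- n) z"

lemma finite_left_config: "finite (supp f) \<Longrightarrow> finite (left_config f k)"
  unfolding left_config_def supp_def
  by (rule finite_subset[of _ "(\<lambda>j. (j, f j)) ` {j. f j \<noteq> 0}"]) auto

lemma config_code_eq_iff:
  "finite A \<Longrightarrow> finite B \<Longrightarrow> config_code A = config_code B \<longleftrightarrow> A = B"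
  using inj_on_to_nat_on[OF countable_Collect_finite] unfolding config_code_def inj_on_def by blast

lemma finite_supp_reflect: "finite (supp f) \<Longrightarrow> finite (supp (reflect f))"
  using finite_supp_comp[of uminus f] by (simp add: reflect_def[abs_def])

lemma tree_neq_0D:
  "tree p f n (k, a) \<noteq> 0 \<Longrightarrow> left_config f k \<noteq> {} \<and> a = config_code (left_config f k) \<and> k \<le> n"
  by (auto simp: tree_def weight_def split: if_splits)

lemma finite_nonempty_left_configs:
  assumes "finite (supp f)"
  shows "finite {k. left_config f k \<noteq> {} \<and> k \<le> n}"
proof -
  obtain B where B: "\<And>j. j \<in> supp f \<Longrightarrow> \<bar>j\<bar> \<le> B"
    using assms unfolding finite_int_iff_bounded_le by (auto simp: subset_iff)
  have "k \<in> {- B..n}" if "left_config f k \<noteq> {}" "k \<le> n" for k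
  proof -
    from that(1) obtain j where "j < k" "f j \<noteq> 0"
      by (auto simp: left_config_def)
    then show ?thesis
      using B[of j] that(2) by (auto simp: supp_def)
  qed
  then have "{k. left_config f k \<noteq> {} \<and> k \<le> n} \<subseteq> {- B..n}"
    by blast
  then show ?thesis
    using finite_subset by blast
qed

lemma finite_supp_tree:
  assumes "finite (supp f)"
  shows "finite (supp (tree p f n))"
proof -
  have "supp (tree p f n) \<subseteq> (\<lambda>k. (k, config_code (left_config f k))) ` {k. left_config f k \<noteq> {} \<and> k \<le> n}"
  proof
    fix z
    assume "z \<in> supp (tree p f n)"
    then show "z \<in> (\<lambda>k. (k, config_code (left_config f k))) ` {k. left_config f k \<noteq> {} \<and> k \<le> n}"
      by (cases z) (auto simp: supp_def dest: tree_neq_0D)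
  qed
  then show ?thesis
    using finite_nonempty_left_configs[OF assms] finite_subset by blast
qed

lemma finite_supp_embed:
  assumes "x \<in> lamp_carrier"
  shows "finite (supp (lamp_embed p x))"
proof -
  obtain f n where x: "x = (f, n)" by fastforce
  have "supp (lamp_embed p x) \<subseteq> insert Cursor (Lamp ` supp f
      \<union> Left_tree ` supp (tree p f n) \<union> Right_tree ` supp (tree p (reflect f) (- n)))"
    unfolding supp_def x
  proof
    fix c
    assume "c \<in> {c. lamp_embed p (f, n) c \<noteq> 0}"
    then show "c \<in> insert Cursor (Lamp ` {j. f j \<noteq> 0} \<union> Left_tree ` {z. tree p f n z \<noteq> 0}
        \<union> Right_tree ` {z. tree p (reflect f) (- n) z \<noteq> 0})"
      by (cases c) force+
  qed
  moreover have "finite (supp f)"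
    using assms x by (simp add: lamp_carrier_def supp_def)
  ultimately show ?thesis
    by (auto intro: finite_subset finite_supp_tree finite_supp_reflect)
qed

lemma coord_decomposition:
  "u c = zero_extend (\<lambda>_::unit. Cursor) (\<lambda>_. u Cursor) c + zero_extend Lamp (\<lambda>j. u (Lamp j)) c
    + zero_extend Left_tree (\<lambda>z. u (Left_tree z)) c + zero_extend Right_tree (\<lambda>z. u (Right_tree z)) c"
proof -
  have inj: "inj Lamp" "inj Left_tree" "inj Right_tree"
    by (auto intro: injI)
  show ?thesis
  proof (cases c)
    case (Lamp j)
    then show ?thesis
      using inv_f_f[OF inj(1), of j] by (auto simp: zero_extend_def image_iff)
  next
    case (Left_tree z)
    then show ?thesis
      using inv_f_f[OF inj(2), of z] by (auto simp: zero_extend_def image_iff)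
  next
    case (Right_tree z)
    then show ?thesis
      using inv_f_f[OF inj(3), of z] by (auto simp: zero_extend_def image_iff)
  qed (auto simp: zero_extend_def image_iff)
qed

lemma lp_norm_coord_le:
  assumes "finite (supp u)" "1 \<le> p"
  shows "lp_norm p u \<le> \<bar>u Cursor\<bar> + lp_norm p (\<lambda>j. u (Lamp j))
    + lp_norm p (\<lambda>z. u (Left_tree z)) + lp_norm p (\<lambda>z. u (Right_tree z))"
proof -
  let ?C = "zero_extend (\<lambda>_::unit. Cursor) (\<lambda>_. u Cursor)"
  let ?L = "zero_extend Lamp (\<lambda>j. u (Lamp j))"
  let ?T = "zero_extend Left_tree (\<lambda>z. u (Left_tree z))"
  let ?R = "zero_extend Right_tree (\<lambda>z. u (Right_tree z))"
  have inj: "inj (\<lambda>_::unit. Cursor)" "inj Lamp" "inj Left_tree" "inj Right_tree"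
    by (auto intro: injI)
  have fin: "finite (supp (\<lambda>_::unit. u Cursor))" "finite (supp (\<lambda>j. u (Lamp j)))"
    "finite (supp (\<lambda>z. u (Left_tree z)))" "finite (supp (\<lambda>z. u (Right_tree z)))"
    using finite_supp_comp[OF inj(2) assms(1)] finite_supp_comp[OF inj(3) assms(1)]
      finite_supp_comp[OF inj(4) assms(1)] by simp_all
  then have finE: "finite (supp ?C)" "finite (supp ?L)" "finite (supp ?T)" "finite (supp ?R)"
    using inj by (simp_all add: supp_zero_extend)
  have "lp_norm p u = lp_norm p (\<lambda>c. ?C c + ?L c + ?T c + ?R c)"
    by (rule arg_cong[where f = "lp_norm p"]) (rule ext, rule coord_decomposition)
  moreover have "lp_norm p (\<lambda>c. ?C c + ?L c + ?T c + ?R c) \<le> lp_norm p (\<lambda>c. ?C c + ?L c + ?T c) + lp_norm p ?R"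
    using finE assms(2) by (intro lp_norm_triangle finite_supp_add)
  moreover have "lp_norm p (\<lambda>c. ?C c + ?L c + ?T c) \<le> lp_norm p (\<lambda>c. ?C c + ?L c) + lp_norm p ?T"
    using finE assms(2) by (intro lp_norm_triangle finite_supp_add)
  moreover have "lp_norm p (\<lambda>c. ?C c + ?L c) \<le> lp_norm p ?C + lp_norm p ?L"
    using finE assms(2) by (intro lp_norm_triangle)
  moreover have "lp_norm p ?C = \<bar>u Cursor\<bar>"
    using assms(2) inj fin lp_norm_singleton[of "\<lambda>_::unit. u Cursor" "()" p]
    by (simp add: lp_norm_zero_extend supp_def UNIV_unit)
  ultimately show ?thesis
    using lp_norm_zero_extend[OF inj(2) fin(2), where p = p] lp_norm_zero_extend[OF inj(3) fin(3), where p = p]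
      lp_norm_zero_extend[OF inj(4) fin(4), where p = p] by linarith
qed

section \<open>The embedding is Lipschitz\<close>

lemma powr_increment_le:
  fixes x p :: real
  assumes "1 \<le> p" "1 \<le> x"
  shows "\<bar>(x + 1) powr (2 / 3 - 1 / p) - x powr (2 / 3 - 1 / p)\<bar> powr p \<le> x powr (- 4 / 3)"
proof -
  define b where "b = 2 / 3 - 1 / p"
  have b: "- 1 / 3 \<le> b" "b \<le> 1"
    using assms unfolding b_def by (auto simp: field_simps)
  have "((\<lambda>z. z powr b) has_real_derivative b * t powr (b - 1)) (at t)" if "x \<le> t" "t \<le> x + 1" for t
    using that assms by (intro has_real_derivative_powr) auto
  then obtain z where z: "x < z" "z < x + 1" "(x + 1) powr b - x powr b = b * z powr (b - 1)"
    using MVT2[of x "x + 1" "\<lambda>z. z powr b" "\<lambda>z. b * z powr (b - 1)"] by auto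
  have "\<bar>(x + 1) powr b - x powr b\<bar> \<le> x powr (b - 1)"
  proof -
    have "\<bar>(x + 1) powr b - x powr b\<bar> = \<bar>b\<bar> * z powr (b - 1)"
      using z by (simp add: abs_mult)
    also have "\<dots> \<le> z powr (b - 1)"
      using b by (intro mult_left_le_one_le) auto
    also have "\<dots> \<le> x powr (b - 1)"
      using powr_mono2'[of "b - 1" x z] b z assms by simp
    finally show ?thesis .
  qed
  then have "\<bar>(x + 1) powr b - x powr b\<bar> powr p \<le> (x powr (b - 1)) powr p"
    using assms by (intro powr_mono2) auto
  also have "\<dots> = x powr (- 1 - p / 3)"
    using assms by (simp add: powr_powr b_def algebra_simps diff_divide_distrib)
  also have "\<dots> \<le> x powr (- 4 / 3)"
    using assms by (intro powr_mono) auto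
  finally show ?thesis
    unfolding b_def .
qed

lemma weight_increment_le:
  assumes "1 \<le> p" "0 \<le> j"
  shows "\<bar>weight p j - weight p (j + 1)\<bar> powr p \<le> (real_of_int j + 1) powr (- 4 / 3)"
  using powr_increment_le[OF assms(1), of "real_of_int j + 1"] assms(2)
  by (simp add: weight_def abs_minus_commute add.commute add.left_commute)

lemma weight_increment_neg_eq:
  assumes "j < 0"
  shows "\<bar>weight p j - weight p (j + 1)\<bar> powr p = (if j = - 1 then 1 else 0)"
  using assms by (simp add: weight_def)

lemma summable_powr_four_thirds: "summable (\<lambda>i::nat. (real i + 1) powr (- 4 / 3))"
proof -
  have "summable (\<lambda>i::nat. real i powr (- 4 / 3))"
    by (simp add: summable_real_powr_iff)
  from summable_ignore_initial_segment[OF this, of 1] show ?thesis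
    by (simp add: add.commute)
qed

text \<open>The summand 1 accounts for the weight that appears at the new cursor position.\<close>

definition shift_bound :: "real \<Rightarrow> real" where
  "shift_bound p = (1 + (\<Sum>i. (real i + 1) powr (- 4 / 3))) powr (1 / p)"

lemma shift_bound_nonneg: "0 \<le> shift_bound p"
  by (simp add: shift_bound_def)

lemma sum_weight_increments_le:
  assumes "finite J" "1 \<le> p"
  shows "(\<Sum>j\<in>J. \<bar>weight p j - weight p (j + 1)\<bar> powr p) \<le> 1 + (\<Sum>i. (real i + 1) powr (- 4 / 3))"
proof -
  let ?h = "\<lambda>j. \<bar>weight p j - weight p (j + 1)\<bar> powr p"
  let ?N = "{j\<in>J. j < 0}" and ?P = "{j\<in>J. 0 \<le> j}"
  have "(\<Sum>j\<in>?N. ?h j) = (\<Sum>j\<in>?N. if j = - 1 then 1 else 0)"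
    by (rule sum.cong) (auto simp: weight_increment_neg_eq)
  also have "\<dots> \<le> 1"
    using assms(1) by (simp add: sum.delta')
  finally have neg: "(\<Sum>j\<in>?N. ?h j) \<le> 1" .
  have "(\<Sum>j\<in>?P. ?h j) \<le> (\<Sum>j\<in>?P. (real (nat j) + 1) powr (- 4 / 3))"
  proof (rule sum_mono)
    fix j
    assume "j \<in> ?P"
    then show "?h j \<le> (real (nat j) + 1) powr (- 4 / 3)"
      using weight_increment_le[OF assms(2), of j] by simp
  qed
  also have "\<dots> = (\<Sum>i\<in>nat ` ?P. (real i + 1) powr (- 4 / 3))"
    by (subst sum.reindex) (auto simp: inj_on_def)
  also have "\<dots> \<le> (\<Sum>i. (real i + 1) powr (- 4 / 3))"
    using assms(1) by (intro sum_le_suminf summable_powr_four_thirds) auto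
  finally have nonneg: "(\<Sum>j\<in>?P. ?h j) \<le> (\<Sum>i. (real i + 1) powr (- 4 / 3))" .
  have "J = ?N \<union> ?P" "?N \<inter> ?P = {}"
    by auto
  then have "(\<Sum>j\<in>J. ?h j) = (\<Sum>j\<in>?N. ?h j) + (\<Sum>j\<in>?P. ?h j)"
    using assms(1) by (metis (no_types, lifting) finite_Un sum.union_disjoint)
  then show ?thesis
    using neg nonneg by linarith
qed

lemma tree_at_config [simp]:
  "left_config f k \<noteq> {} \<Longrightarrow> tree p f n (k, config_code (left_config f k)) = weight p (n - k)"
  by (simp add: tree_def)

lemma lp_norm_tree_shift_le:
  assumes "finite (supp f)" "1 \<le> p"
  shows "lp_norm p (\<lambda>z. tree p f n z - tree p f (n + 1) z) \<le> shift_bound p"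
proof -
  let ?u = "\<lambda>z. tree p f n z - tree p f (n + 1) z"
  let ?K = "{k. left_config f k \<noteq> {} \<and> k \<le> n + 1}"
  let ?\<iota> = "\<lambda>k. (k, config_code (left_config f k))"
  have finK: "finite ?K"
    using finite_nonempty_left_configs[OF assms(1)] .
  have inj: "inj_on ?\<iota> ?K"
    by (auto intro: inj_onI)
  have "supp ?u \<subseteq> ?\<iota> ` ?K"
  proof
    fix z
    assume "z \<in> supp ?u"
    then have "tree p f n z \<noteq> 0 \<or> tree p f (n + 1) z \<noteq> 0"
      by (auto simp: supp_def)
    then show "z \<in> ?\<iota> ` ?K"
      by (cases z) (auto dest!: tree_neq_0D)
  qed
  moreover have "(\<Sum>z\<in>?\<iota> ` ?K. \<bar>?u z\<bar> powr p) \<le> 1 + (\<Sum>i. (real i + 1) powr (- 4 / 3))"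
  proof -
    have "(\<Sum>z\<in>?\<iota> ` ?K. \<bar>?u z\<bar> powr p) = (\<Sum>k\<in>?K. \<bar>weight p (n - k) - weight p (n - k + 1)\<bar> powr p)"
      by (subst sum.reindex[OF inj]) (auto intro!: sum.cong simp: algebra_simps)
    also have "\<dots> = (\<Sum>j\<in>(\<lambda>k. n - k) ` ?K. \<bar>weight p j - weight p (j + 1)\<bar> powr p)"
      by (subst sum.reindex) (auto simp: inj_on_def)
    also have "\<dots> \<le> 1 + (\<Sum>i. (real i + 1) powr (- 4 / 3))"
      using finK assms(2) by (intro sum_weight_increments_le) auto
    finally show ?thesis .
  qed
  ultimately show ?thesis
    unfolding shift_bound_def using finK assms(2) by (intro lp_norm_le_of_sum_le) auto
qed

lemma lp_norm_tree_adjacent_le: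
  assumes "finite (supp f)" "1 \<le> p" "\<bar>m - n\<bar> = 1"
  shows "lp_norm p (\<lambda>z. tree p f n z - tree p f m z) \<le> shift_bound p"
proof (cases "m = n + 1")
  case True
  then show ?thesis
    using lp_norm_tree_shift_le[OF assms(1,2), of n] by simp
next
  case False
  then have "n = m + 1"
    using assms(3) by linarith
  then show ?thesis
    using lp_norm_tree_shift_le[OF assms(1,2), of m] lp_norm_minus_commute by metis
qed

lemma tree_update_cursor: "tree p (f(n := v)) n = tree p f n"
proof
  fix z :: "int \<times> nat"
  obtain k a where z: "z = (k, a)" by fastforce
  show "tree p (f(n := v)) n z = tree p f n z"
  proof (cases "k \<le> n")
    case True
    then have "\<And>j. j < k \<Longrightarrow> (f(n := v)) j = f j"
      by simp
    then have "left_config (f(n := v)) k = left_config f k"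
      unfolding left_config_def by (metis (no_types, lifting))
    then show ?thesis
      by (simp add: tree_def z)
  qed (simp add: tree_def weight_def z)
qed

lemma reflect_update: "reflect (f(n := v)) = (reflect f)(- n := v)"
  by (auto simp: reflect_def)

lemma lp_norm_lamp_update:
  assumes "0 < p"
  shows "lp_norm p (\<lambda>j. real_of_int (f j) - real_of_int ((f(n := v)) j)) = \<bar>real_of_int (f n - v)\<bar>"
proof -
  have "supp (\<lambda>j. real_of_int (f j) - real_of_int ((f(n := v)) j)) \<subseteq> {n}"
    by (auto simp: supp_def)
  then show ?thesis
    using lp_norm_singleton assms by fastforce
qed

lemma lp_norm_lamp_embed_step_le:
  assumes "x \<in> lamp_carrier" "s \<in> lamp_gens" "1 \<le> p"
  shows "lp_norm p (\<lambda>c. lamp_embed p x c - lamp_embed p (lamp_mult x s) c) \<le> 1 + 2 * shift_bound p"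
proof -
  obtain f n where x: "x = (f, n)" by fastforce
  let ?u = "\<lambda>c. lamp_embed p x c - lamp_embed p (lamp_mult x s) c"
  have f: "finite (supp f)" "finite (supp (reflect f))"
    using assms(1) x finite_supp_reflect by auto
  have "finite (supp ?u)"
    using assms by (intro finite_supp_diff finite_supp_embed lamp_mult_gen_in_carrier)
  then have "lp_norm p ?u \<le> \<bar>?u Cursor\<bar> + lp_norm p (\<lambda>j. ?u (Lamp j))
      + lp_norm p (\<lambda>z. ?u (Left_tree z)) + lp_norm p (\<lambda>z. ?u (Right_tree z))"
    using assms(3) by (rule lp_norm_coord_le)
  also have "\<dots> \<le> 1 + 2 * shift_bound p"
    using assms(2)
  proof (cases rule: lamp_gens_cases)
    case up
    then show ?thesis
      using lp_norm_lamp_update[of p f n "f n + 1"] shift_bound_nonneg[of p] assms(3)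
      by (simp add: x tree_update_cursor reflect_update)
  next
    case down
    then show ?thesis
      using lp_norm_lamp_update[of p f n "f n - 1"] shift_bound_nonneg[of p] assms(3)
      by (simp add: x tree_update_cursor reflect_update)
  next
    case right
    then show ?thesis
      using lp_norm_tree_adjacent_le[OF f(1) assms(3), of "n + 1" n]
        lp_norm_tree_adjacent_le[OF f(2) assms(3), of "- (n + 1)" "- n"] by (simp add: x)
  next
    case left
    then show ?thesis
      using lp_norm_tree_adjacent_le[OF f(1) assms(3), of "n - 1" n]
        lp_norm_tree_adjacent_le[OF f(2) assms(3), of "- (n - 1)" "- n"] by (simp add: x)
  qed
  finally show ?thesis .
qed

lemma lp_norm_lamp_embed_path_le:
  assumes "lamp_path x k y" "x \<in> lamp_carrier" "1 \<le> p"
  shows "lp_norm p (\<lambda>c. lamp_embed p x c - lamp_embed p y c) \<le> (1 + 2 * shift_bound p) * k"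
  using assms
proof (induction rule: lamp_path.induct)
  case (step x k y s)
  have y: "y \<in> lamp_carrier"
    using lamp_path_in_carrier step.hyps(1) step.prems(1) .
  have "lp_norm p (\<lambda>c. lamp_embed p x c - lamp_embed p (lamp_mult y s) c)
      \<le> lp_norm p (\<lambda>c. lamp_embed p x c - lamp_embed p y c)
        + lp_norm p (\<lambda>c. lamp_embed p y c - lamp_embed p (lamp_mult y s) c)"
    using step y by (intro lp_norm_triangle_diff finite_supp_embed lamp_mult_gen_in_carrier)
  also have "\<dots> \<le> (1 + 2 * shift_bound p) * k + (1 + 2 * shift_bound p)"
    using step y by (intro add_mono lp_norm_lamp_embed_step_le) auto
  finally show ?case
    by (simp add: algebra_simps)
qed simp

lemma lp_norm_lamp_embed_le_dist:
  assumes "x \<in> lamp_carrier" "y \<in> lamp_carrier" "1 \<le> p"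
  shows "lp_norm p (\<lambda>c. lamp_embed p x c - lamp_embed p y c) \<le> (1 + 2 * shift_bound p) * lamp_dist x y"
  using lp_norm_lamp_embed_path_le[OF lamp_path_lamp_dist[OF assms(1,2)] assms(1,3)] .

section \<open>Lower bounds and compression\<close>

lemma powr_succ_diff_le:
  fixes x e :: real
  assumes "0 \<le> x" "0 \<le> e"
  shows "(x + 1) powr (e + 1) - x powr (e + 1) \<le> (e + 1) * (x + 1) powr e"
proof (cases "x = 0")
  case False
  have "((\<lambda>t. t powr (e + 1)) has_real_derivative (e + 1) * t powr e) (at t)" if "x \<le> t" for t
    using that assms False by (intro has_real_derivative_powr[THEN DERIV_cong]) auto
  then obtain z where z: "x < z" "z < x + 1" "(x + 1) powr (e + 1) - x powr (e + 1) = (e + 1) * z powr e"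
    using MVT2[of x "x + 1" "\<lambda>t. t powr (e + 1)" "\<lambda>t. (e + 1) * t powr e"] by auto
  moreover have "z powr e \<le> (x + 1) powr e"
    using z assms by (intro powr_mono2) auto
  ultimately show ?thesis
    using mult_left_mono[of "z powr e" "(x + 1) powr e" "e + 1"] assms(2) by linarith
qed (use assms in simp)

lemma sum_powr_ge:
  fixes p :: real
  assumes "1 \<le> p"
  shows "min 1 (3 / (2 * p)) * real a powr (2 * p / 3) \<le> (\<Sum>j<a. (real j + 1) powr (2 * p / 3 - 1))"
proof -
  define e where "e = 2 * p / 3 - 1"
  have e: "0 < e + 1" "e + 1 = 2 * p / 3"
    using assms by (auto simp: e_def)
  have "real a powr (e + 1) \<le> max 1 (e + 1) * (\<Sum>j<a. (real j + 1) powr e)"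
  proof (cases "e < 0")
    case True
    have "real a powr (e + 1) = (\<Sum>j<a. real a powr e)"
      by (cases "a = 0") (auto simp: powr_add)
    also have "\<dots> \<le> (\<Sum>j<a. (real j + 1) powr e)"
      using True by (intro sum_mono powr_mono2') auto
    also have "\<dots> \<le> max 1 (e + 1) * (\<Sum>j<a. (real j + 1) powr e)"
      using mult_right_mono[of 1 "max 1 (e + 1)" "\<Sum>j<a. (real j + 1) powr e"] by (simp add: sum_nonneg)
    finally show ?thesis .
  next
    case False
    have step: "(real j + 1) powr (e + 1) - real j powr (e + 1) \<le> (e + 1) * (real j + 1) powr e" for j :: nat
      using powr_succ_diff_le[of "real j" e] False by simp
    have "real a powr (e + 1) = (\<Sum>j<a. (real j + 1) powr (e + 1) - real j powr (e + 1))"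
      using sum_lessThan_telescope[of "\<lambda>j. real j powr (e + 1)" a] by (simp add: add.commute)
    also have "\<dots> \<le> (\<Sum>j<a. (e + 1) * (real j + 1) powr e)"
      by (intro sum_mono step)
    also have "\<dots> \<le> max 1 (e + 1) * (\<Sum>j<a. (real j + 1) powr e)"
      by (simp add: sum_distrib_left[symmetric] mult_right_mono sum_nonneg)
    finally show ?thesis .
  qed
  then have "real a powr (e + 1) / max 1 (e + 1) \<le> (\<Sum>j<a. (real j + 1) powr e)"
    by (simp add: divide_le_eq mult.commute)
  moreover have "min 1 (3 / (2 * p)) = 1 / max 1 (e + 1)"
    using e by (auto simp: min_def max_def field_simps)
  ultimately show ?thesis
    unfolding e_def[symmetric] e(2)[symmetric] by simp
qed

definition growth_const :: "real \<Rightarrow> real" where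
  "growth_const p = min 1 (3 / (2 * p)) powr (1 / p)"

lemma growth_const_pos:
  assumes "1 \<le> p"
  shows "0 < growth_const p"
proof -
  have "0 < min 1 (3 / (2 * p))"
    using assms by simp
  then show ?thesis
    unfolding growth_const_def by (metis less_irrefl powr_gt_zero)
qed

lemma growth_const_le_1: "1 \<le> p \<Longrightarrow> growth_const p \<le> 1"
  unfolding growth_const_def by (rule powr_le1) auto

lemma lp_norm_ge_weights:
  assumes "finite (supp u)" "1 \<le> p" "inj_on \<iota> {..<a}"
    and "\<And>j. j < a \<Longrightarrow> \<bar>u (\<iota> j)\<bar> = weight p (int j)"
  shows "growth_const p * real a powr (2 / 3) \<le> lp_norm p u"
proof -
  have "\<bar>u (\<iota> j)\<bar> powr p = (real j + 1) powr (2 * p / 3 - 1)" if "j < a" for j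
  proof -
    have "\<bar>u (\<iota> j)\<bar> powr p = ((real j + 1) powr (2 / 3 - 1 / p)) powr p"
      using assms(4)[OF that] by (simp add: weight_def)
    also have "\<dots> = (real j + 1) powr (2 * p / 3 - 1)"
      using assms(2) by (simp add: powr_powr algebra_simps diff_divide_distrib)
    finally show ?thesis .
  qed
  then have "(\<Sum>w\<in>\<iota> ` {..<a}. \<bar>u w\<bar> powr p) = (\<Sum>j<a. (real j + 1) powr (2 * p / 3 - 1))"
    by (simp add: sum.reindex[OF assms(3)])
  then have "min 1 (3 / (2 * p)) * real a powr (2 * p / 3) \<le> (\<Sum>w\<in>\<iota> ` {..<a}. \<bar>u w\<bar> powr p)"
    using sum_powr_ge[OF assms(2)] by simp
  then have "(min 1 (3 / (2 * p)) * real a powr (2 * p / 3)) powr (1 / p)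
      \<le> (\<Sum>w\<in>\<iota> ` {..<a}. \<bar>u w\<bar> powr p) powr (1 / p)"
    using assms(2) by (intro powr_mono2) auto
  also have "\<dots> \<le> lp_norm p u"
    using assms(1,2) by (intro sum_le_lp_norm) auto
  finally show ?thesis
    using assms(2) by (simp add: growth_const_def powr_mult powr_powr)
qed

lemma lp_norm_tree_diff_ge:
  assumes "finite (supp f)" "finite (supp g)" "f s \<noteq> g s" "f s \<noteq> 0" "s + int a \<le> n" "1 \<le> p"
  shows "growth_const p * real a powr (2 / 3) \<le> lp_norm p (\<lambda>z. tree p f n z - tree p g m z)"
proof (rule lp_norm_ge_weights)
  let ?\<iota> = "\<lambda>j::nat. (n - int j, config_code (left_config f (n - int j)))"
  show "finite (supp (\<lambda>z. tree p f n z - tree p g m z))"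
    using assms(1,2) by (intro finite_supp_diff finite_supp_tree)
  show "inj_on ?\<iota> {..<a}"
    by (auto intro: inj_onI)
  fix j
  assume "j < a"
  then have "s < n - int j"
    using assms(5) by linarith
  then have mem: "(s, f s) \<in> left_config f (n - int j)"
    using assms(4) by (auto simp: left_config_def)
  moreover have "(s, f s) \<notin> left_config g (n - int j)"
    using assms(3) by (auto simp: left_config_def)
  ultimately have "config_code (left_config f (n - int j)) \<noteq> config_code (left_config g (n - int j))"
    using assms(1,2) by (auto simp: config_code_eq_iff finite_left_config)
  then have "tree p g m (?\<iota> j) = 0"
    by (auto simp: tree_def)
  moreover have "tree p f n (?\<iota> j) = weight p (n - (n - int j))"
    using mem by (intro tree_at_config) blast
  ultimately show "\<bar>tree p f n (?\<iota> j) - tree p g m (?\<iota> j)\<bar> = weight p (int j)"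
    by (simp add: weight_def)
qed (use assms in auto)

lemma lp_norm_tree_diff_ge_min:
  assumes "finite (supp f)" "finite (supp g)" "f s \<noteq> g s" "s < min n m" "1 \<le> p"
  shows "growth_const p * real_of_int (min n m - s) powr (2 / 3)
    \<le> lp_norm p (\<lambda>z. tree p f n z - tree p g m z)"
proof -
  have a: "real (nat (min n m - s)) = real_of_int (min n m - s)" "s + int (nat (min n m - s)) = min n m"
    using assms(4) by auto
  show ?thesis
  proof (cases "f s = 0")
    case False
    then show ?thesis
      using lp_norm_tree_diff_ge[OF assms(1-3) False _ assms(5), of "nat (min n m - s)" n m] a by simp
  next
    case True
    then have "g s \<noteq> 0"
      using assms(3) by simp
    then show ?thesis
      using lp_norm_tree_diff_ge[OF assms(2,1) assms(3)[symmetric] _ _ assms(5), of "nat (min n m - s)" m n] a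
        lp_norm_minus_commute by (metis min.cobounded2)
  qed
qed

lemma lp_norm_lamp_embed_ge:
  assumes "(f, n) \<in> lamp_carrier" "(g, m) \<in> lamp_carrier" "1 \<le> p"
  defines "N \<equiv> lp_norm p (\<lambda>c. lamp_embed p (f, n) c - lamp_embed p (g, m) c)"
  shows "\<bar>real_of_int (n - m)\<bar> \<le> N"
    and "\<bar>real_of_int (f j - g j)\<bar> \<le> N"
    and "f s \<noteq> g s \<Longrightarrow> s < min n m \<Longrightarrow> growth_const p * real_of_int (min n m - s) powr (2 / 3) \<le> N"
    and "f t \<noteq> g t \<Longrightarrow> max n m < t \<Longrightarrow> growth_const p * real_of_int (t - max n m) powr (2 / 3) \<le> N"
proof -
  let ?u = "\<lambda>c. lamp_embed p (f, n) c - lamp_embed p (g, m) c"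
  have fin: "finite (supp ?u)"
    using assms(1,2) by (intro finite_supp_diff finite_supp_embed)
  have ff: "finite (supp f)" "finite (supp g)"
    using assms(1,2) by auto
  show "\<bar>real_of_int (n - m)\<bar> \<le> N"
    using abs_le_lp_norm[OF fin, of p Cursor] assms(3) by (simp add: N_def)
  show "\<bar>real_of_int (f j - g j)\<bar> \<le> N"
    using abs_le_lp_norm[OF fin, of p "Lamp j"] assms(3) by (simp add: N_def)
  have left: "lp_norm p (\<lambda>z. tree p f n z - tree p g m z) \<le> N"
    using lp_norm_comp_le[OF _ fin, of Left_tree p] assms(3) by (simp add: N_def inj_def)
  have right: "lp_norm p (\<lambda>z. tree p (reflect f) (- n) z - tree p (reflect g) (- m) z) \<le> N"
    using lp_norm_comp_le[OF _ fin, of Right_tree p] assms(3) by (simp add: N_def inj_def)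
  show "growth_const p * real_of_int (min n m - s) powr (2 / 3) \<le> N"
    if "f s \<noteq> g s" "s < min n m"
    using lp_norm_tree_diff_ge_min[OF ff that assms(3)] left by linarith
  show "growth_const p * real_of_int (t - max n m) powr (2 / 3) \<le> N"
    if "f t \<noteq> g t" "max n m < t"
  proof -
    have "reflect f (- t) \<noteq> reflect g (- t)" "- t < min (- n) (- m)"
      using that by (auto simp: reflect_def)
    from lp_norm_tree_diff_ge_min[OF finite_supp_reflect[OF ff(1)] finite_supp_reflect[OF ff(2)] this assms(3)]
    have "growth_const p * real_of_int (min (- n) (- m) - - t) powr (2 / 3)
        \<le> lp_norm p (\<lambda>z. tree p (reflect f) (- n) z - tree p (reflect g) (- m) z)" .
    moreover have "min (- n) (- m) - - t = t - max n m"
      by (simp add: min_def max_def)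
    ultimately show ?thesis
      using right by simp
  qed
qed

lemma sweep_cost_arith:
  fixes R N D :: real
  assumes "1 \<le> R" "0 \<le> N" "N \<le> R" "0 \<le> D" "D \<le> 3 * R powr (3 / 2)"
  shows "3 * D + (D + 1) * N \<le> 13 * R powr (5 / 2)"
proof -
  have R32: "R \<le> R powr (3 / 2)" "R powr (3 / 2) \<le> R powr (5 / 2)"
    using assms(1) powr_mono[of 1 "3 / 2" R] powr_mono[of "3 / 2" "5 / 2" R] by auto
  have "R powr (3 / 2) * R = R powr (5 / 2)"
    using assms(1) powr_add[of R "3 / 2" 1] by simp
  moreover have "(D + 1) * N \<le> (3 * R powr (3 / 2) + 1) * R"
    using assms by (intro mult_mono) auto
  ultimately show ?thesis
    using assms(5) R32 by (simp add: algebra_simps)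
qed

lemma le_max_powr_three_halves:
  fixes c N X :: real
  assumes "0 < c" "c * X powr (2 / 3) \<le> N"
  shows "X \<le> max 1 (N / c) powr (3 / 2)"
proof (cases "0 \<le> X")
  case True
  have "X powr (2 / 3) \<le> N / c"
    using assms by (simp add: pos_le_divide_eq mult.commute)
  then have "X powr (2 / 3) \<le> max 1 (N / c)"
    by simp
  then have "(X powr (2 / 3)) powr (3 / 2) \<le> max 1 (N / c) powr (3 / 2)"
    by (intro powr_mono2) auto
  then show ?thesis
    using True by (simp add: powr_powr)
next
  case False
  then show ?thesis
    using powr_ge_zero[of "max 1 (N / c)" "3 / 2"] by linarith
qed

lemma lamp_dist_le_lp_norm:
  assumes "x \<in> lamp_carrier" "y \<in> lamp_carrier" "1 \<le> p"
  defines "N \<equiv> lp_norm p (\<lambda>c. lamp_embed p x c - lamp_embed p y c)"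
  shows "real (lamp_dist x y) \<le> 13 * max 1 (N / growth_const p) powr (5 / 2)"
proof -
  obtain f n g m where xy: "x = (f, n)" "y = (g, m)" by fastforce
  note lower = lp_norm_lamp_embed_ge[OF assms(1,2)[unfolded xy] assms(3), folded xy, folded N_def]
  define R where "R = max 1 (N / growth_const p)"
  have c: "0 < growth_const p" "growth_const p \<le> 1"
    using growth_const_pos growth_const_le_1 assms(3) by auto
  have N: "0 \<le> N"
    by (simp add: N_def lp_norm_nonneg)
  then have "N \<le> N / growth_const p"
    using c by (simp add: le_divide_eq mult_right_le_one_le)
  then have "N \<le> R"
    by (simp add: R_def)
  have root: "real_of_int X \<le> R powr (3 / 2)" if "growth_const p * real_of_int X powr (2 / 3) \<le> N" for X
    using le_max_powr_three_halves[OF c(1) that] by (simp add: R_def)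
  have "finite (supp f)" "finite (supp g)"
    using assms(1,2) xy by auto
  then obtain lo hi where window: "lo \<le> min n m" "max n m \<le> hi" "\<forall>j. j < lo \<or> hi < j \<longrightarrow> f j = g j"
    "lo < min n m \<Longrightarrow> f lo \<noteq> g lo" "max n m < hi \<Longrightarrow> f hi \<noteq> g hi"
    by (rule disagreement_window[where n = n and m = m]) blast
  have "real_of_int (min n m - lo) \<le> R powr (3 / 2)"
    using window(1,4) lower(3)[of lo] root[of "min n m - lo"] by (cases "lo < min n m") auto
  moreover have "real_of_int (hi - max n m) \<le> R powr (3 / 2)"
    using window(2,5) lower(4)[of hi] root[of "hi - max n m"] by (cases "max n m < hi") auto
  moreover have "\<bar>real_of_int (n - m)\<bar> \<le> R powr (3 / 2)"
    using lower(1) \<open>N \<le> R\<close> powr_mono[of 1 "3 / 2" R] by (auto simp: R_def)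
  ultimately have D: "real_of_int (hi - lo) \<le> 3 * R powr (3 / 2)"
    by (simp add: min_def max_def split: if_splits)
  have "real (lamp_dist x y) \<le> 3 * real_of_int (hi - lo) + (real_of_int (hi - lo) + 1) * N"
    using lamp_dist_le_window[of lo n m hi f g N] window lower(2) xy by simp
  also have "\<dots> \<le> 13 * R powr (5 / 2)"
    using window N \<open>N \<le> R\<close> D by (intro sweep_cost_arith) (auto simp: R_def)
  finally show ?thesis
    by (simp add: R_def)
qed

lemma lamp_embed_compression:
  assumes "1 \<le> p" "\<alpha> \<le> 2 / 5"
  shows "\<exists>c>0. \<forall>x\<in>lamp_carrier. \<forall>y\<in>lamp_carrier. 14 \<le> real (lamp_dist x y) \<longrightarrow>
    c * real (lamp_dist x y) powr \<alpha> \<le> lp_norm p (\<lambda>w. lamp_embed p x w - lamp_embed p y w)"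
proof (intro exI conjI ballI impI)
  show "0 < growth_const p * 13 powr (- 2 / 5)"
    using growth_const_pos[OF assms(1)] by simp
  fix x y
  assume xy: "x \<in> lamp_carrier" "y \<in> lamp_carrier" and d: "14 \<le> real (lamp_dist x y)"
  define N where "N = lp_norm p (\<lambda>w. lamp_embed p x w - lamp_embed p y w)"
  define R where "R = max 1 (N / growth_const p)"
  have bound: "real (lamp_dist x y) / 13 \<le> R powr (5 / 2)"
    using lamp_dist_le_lp_norm[OF xy assms(1)] by (simp add: N_def R_def)
  then have "1 < R"
    using d unfolding R_def by (cases "1 < N / growth_const p") auto
  then have "(real (lamp_dist x y) / 13) powr (2 / 5) \<le> N / growth_const p"
    using powr_mono2[OF _ _ bound, of "2 / 5"] d by (simp add: R_def powr_powr)
  then have "growth_const p * 13 powr (- 2 / 5) * real (lamp_dist x y) powr (2 / 5) \<le> N"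
    using growth_const_pos[OF assms(1)] d by (simp add: powr_divide powr_minus_divide field_simps)
  moreover have "growth_const p * 13 powr (- 2 / 5) * real (lamp_dist x y) powr \<alpha>
      \<le> growth_const p * 13 powr (- 2 / 5) * real (lamp_dist x y) powr (2 / 5)"
    using d assms(2) growth_const_pos[OF assms(1)] by (intro mult_left_mono powr_mono) auto
  ultimately show "growth_const p * 13 powr (- 2 / 5) * real (lamp_dist x y) powr \<alpha> \<le> N"
    by linarith
qed

definition coord_code :: "coord \<Rightarrow> nat \<times> real" where
  "coord_code c = (to_nat c, 0)"

definition lamp_embedding :: "real \<Rightarrow> lamp \<Rightarrow> nat \<times> real \<Rightarrow> real" where
  "lamp_embedding p x = zero_extend coord_code (lamp_embed p x)"

lemma inj_coord_code: "inj coord_code"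
  by (auto intro: injI simp: coord_code_def)

lemma in_Lp_lamp_embedding: "x \<in> lamp_carrier \<Longrightarrow> in_Lp (count_space UNIV) p (lamp_embedding p x)"
  unfolding lamp_embedding_def using inj_coord_code
  by (intro in_Lp_count_space) (simp add: supp_zero_extend finite_supp_embed)

lemma Lp_norm_lamp_embedding:
  assumes "x \<in> lamp_carrier" "y \<in> lamp_carrier"
  shows "Lp_norm (count_space UNIV) p (\<lambda>\<omega>. lamp_embedding p x \<omega> - lamp_embedding p y \<omega>)
    = lp_norm p (\<lambda>c. lamp_embed p x c - lamp_embed p y c)"
  using assms inj_coord_code
  by (simp add: lamp_embedding_def zero_extend_diff[symmetric] Lp_norm_count_space lp_norm_zero_extend
      supp_zero_extend finite_supp_diff finite_supp_embed)

theorem corollary4p2p8: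
  fixes p :: real and \<alpha> :: real
  assumes "1 \<le> p" and "\<alpha> < 1 / 3"
  shows "\<exists>(M :: (nat \<times> real) measure) (\<theta> :: lamp \<Rightarrow> nat \<times> real \<Rightarrow> real).
           (\<forall>x\<in>lamp_carrier. in_Lp M p (\<theta> x)) \<and>
           (\<exists>L. \<forall>x\<in>lamp_carrier. \<forall>y\<in>lamp_carrier.
                 Lp_norm M p (\<lambda>\<omega>. \<theta> x \<omega> - \<theta> y \<omega>) \<le> L * real (lamp_dist x y)) \<and>
           (\<exists>c > 0. \<exists>t0 :: real. \<forall>x\<in>lamp_carrier. \<forall>y\<in>lamp_carrier.
                 t0 \<le> real (lamp_dist x y) \<longrightarrow>
                 c * real (lamp_dist x y) powr \<alpha> \<le> Lp_norm M p (\<lambda>\<omega>. \<theta> x \<omega> - \<theta> y \<omega>))"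
proof -
  obtain c where "0 < c" and c: "\<forall>x\<in>lamp_carrier. \<forall>y\<in>lamp_carrier. 14 \<le> real (lamp_dist x y) \<longrightarrow>
      c * real (lamp_dist x y) powr \<alpha> \<le> lp_norm p (\<lambda>w. lamp_embed p x w - lamp_embed p y w)"
    using lamp_embed_compression[OF assms(1), of \<alpha>] assms(2) by auto
  show ?thesis
  proof (intro exI conjI)
    show "\<forall>x\<in>lamp_carrier. in_Lp (count_space UNIV) p (lamp_embedding p x)"
      by (simp add: in_Lp_lamp_embedding)
    show "\<forall>x\<in>lamp_carrier. \<forall>y\<in>lamp_carrier. Lp_norm (count_space UNIV) p
        (\<lambda>\<omega>. lamp_embedding p x \<omega> - lamp_embedding p y \<omega>) \<le> (1 + 2 * shift_bound p) * real (lamp_dist x y)"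
      using lp_norm_lamp_embed_le_dist[OF _ _ assms(1)] by (simp add: Lp_norm_lamp_embedding)
    show "\<forall>x\<in>lamp_carrier. \<forall>y\<in>lamp_carrier. 14 \<le> real (lamp_dist x y) \<longrightarrow>
        c * real (lamp_dist x y) powr \<alpha> \<le> Lp_norm (count_space UNIV) p
          (\<lambda>\<omega>. lamp_embedding p x \<omega> - lamp_embedding p y \<omega>)"
      using c by (simp add: Lp_norm_lamp_embedding)
  qed (rule \<open>0 < c\<close>)
qed

end
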